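(* Let $z_1,z_2\in(0,1)$ and set $$\alpha_1=z_2\frac{1-z_1}{1+z_1},\qquad \alpha_2=\frac{1}{z_2}\frac{1-z_1}{1+z_1}.$$ Define, for $n\in\mathbb Z$, $$w_n=\int_{-\pi}^{\pi}\frac{d\theta}{2\pi}\,\frac{\left(1+\alpha_1\alpha_2-(\alpha_1+\alpha_2)\cos\theta\right)\cos(n\theta)-(\alpha_1-\alpha_2)\sin\theta\,\sin(n\theta)}{\sqrt{(1-2\alpha_1\cos\theta+\alpha_1^2)(1-2\alpha_2\cos\theta+\alpha_2^2)}},$$ the Fourier coefficients of the weight $w(\zeta)=\left[\frac{(1-\alpha_1\zeta)(1-\alpha_2\zeta^{-1})}{(1-\alpha_1\zeta^{-1})(1-\alpha_2\zeta)}\right]^{1/2}$ on $|\zeta|=1$ (these are the Toeplitz matrix elements whose $N\times N$ Toeplitz determinant gives the column correlation $\langle\sigma_{0,0}\sigma_{0,N}\rangle$ of the anisotropic square lattice Ising model). Then for every $n\in\mathbb Z$, \begin{multline*} 2\alpha_1\alpha_2(n-3)w_{n-3}-(1+\alpha_1\alpha_2)\left[(2n-5)\alpha_1+(2n-3)\alpha_2\right]w_{n-2}\\ +2\left[(n-2)\alpha_1^2+n\alpha_2^2+(n-1)(1+\alpha_1\alpha_2)^2\right]w_{n-1}\\ -(1+\alpha_1\alpha_2)\left[(2n-1)\alpha_1+(2n+1)\alpha_2\right]w_n+2\alpha_1\alpha_2(n+1)w_{n+1}=0 . \end{multline*}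
   Context: Here $z_i=\tanh K_i$ where $K_1,K_2$ are the horizontal and vertical couplings of the square lattice Ising model (ferromagnetic regime); the square root in the integrand is taken positive. *)

theory Defs
  imports "HOL-Analysis.Analysis"
begin

definition ising_w :: "real \<Rightarrow> real \<Rightarrow> int \<Rightarrow> real" where
  "ising_w a1 a2 n =
     integral {-pi..pi}
       (\<lambda>\<theta>. ((1 + a1 * a2 - (a1 + a2) * cos \<theta>) * cos (of_int n * \<theta>)
               - (a1 - a2) * sin \<theta> * sin (of_int n * \<theta>))
             / sqrt ((1 - 2 * a1 * cos \<theta> + a1\<^sup>2) * (1 - 2 * a2 * cos \<theta> + a2\<^sup>2)))
     / (2 * pi)"

end

theory Submission
  imports Defs
begin

text \<open>
  Write \<open>P = 1 + \<alpha>\<^sub>1\<alpha>\<^sub>2 - (\<alpha>\<^sub>1 + \<alpha>\<^sub>2) cos \<theta>\<close> and \<open>Q = (\<alpha>\<^sub>1 - \<alpha>\<^sub>2) sin \<theta>\<close>. The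
  integrand of \<open>w\<^sub>k\<close> is \<open>(P cos k\<theta> - Q sin k\<theta>) / \<surd>D\<close> with \<open>D = P\<^sup>2 + Q\<^sup>2\<close>, so it is
  bounded by 1. A trigonometric identity shows that the five-term combination of these
  integrands occurring in the recurrence (centred at \<open>m = n - 1\<close>) is twice the derivative
  of \<open>G(\<theta>) = (P sin m\<theta> + Q cos m\<theta>) \<surd>D\<close> wherever \<open>D > 0\<close>, i.e. off \<open>\<theta> \<in> {0, \<plusminus>\<pi>}\<close>.
  For integer \<open>m\<close>, \<open>G\<close> vanishes at \<open>\<plusminus>\<pi>\<close>, so the combination of the integrals is zero.
  The recurrence holds for all real \<open>\<alpha>\<^sub>1, \<alpha>\<^sub>2\<close>.
\<close>

definition ising_symbol :: "real \<Rightarrow> real \<Rightarrow> real \<Rightarrow> real" where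
  "ising_symbol a1 a2 t = (1 - 2 * a1 * cos t + a1\<^sup>2) * (1 - 2 * a2 * cos t + a2\<^sup>2)"

definition ising_numerator :: "real \<Rightarrow> real \<Rightarrow> real \<Rightarrow> real \<Rightarrow> real" where
  "ising_numerator a1 a2 k t =
     (1 + a1 * a2 - (a1 + a2) * cos t) * cos (k * t) - (a1 - a2) * sin t * sin (k * t)"

definition ising_conjugate :: "real \<Rightarrow> real \<Rightarrow> real \<Rightarrow> real \<Rightarrow> real" where
  "ising_conjugate a1 a2 k t =
     (1 + a1 * a2 - (a1 + a2) * cos t) * sin (k * t) + (a1 - a2) * sin t * cos (k * t)"

definition ising_integrand :: "real \<Rightarrow> real \<Rightarrow> real \<Rightarrow> real \<Rightarrow> real" where
  "ising_integrand a1 a2 k t = ising_numerator a1 a2 k t / sqrt (ising_symbol a1 a2 t)"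

definition ising_recurrence :: "real \<Rightarrow> real \<Rightarrow> real \<Rightarrow> (real \<Rightarrow> real) \<Rightarrow> real" where
  "ising_recurrence a1 a2 m f =
       2 * a1 * a2 * (m - 2) * f (m - 2)
     - (1 + a1 * a2) * ((2 * m - 3) * a1 + (2 * m - 1) * a2) * f (m - 1)
     + 2 * ((m - 1) * a1\<^sup>2 + (m + 1) * a2\<^sup>2 + m * (1 + a1 * a2)\<^sup>2) * f m
     - (1 + a1 * a2) * ((2 * m + 1) * a1 + (2 * m + 3) * a2) * f (m + 1)
     + 2 * a1 * a2 * (m + 2) * f (m + 2)"

lemma ising_w_eq_integral:
  "ising_w a1 a2 n = integral {-pi..pi} (ising_integrand a1 a2 (of_int n)) / (2 * pi)"
  unfolding ising_w_def ising_integrand_def ising_numerator_def ising_symbol_def ..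

lemma ising_recurrence_divide:
  "ising_recurrence a1 a2 m (\<lambda>k. f k / c) = ising_recurrence a1 a2 m f / c"
  unfolding ising_recurrence_def by (simp add: diff_divide_distrib add_divide_distrib)

lemma has_integral_ising_recurrence:
  assumes "\<And>k. f k integrable_on S"
  shows "((\<lambda>t. ising_recurrence a1 a2 m (\<lambda>k. f k t)) has_integral
           ising_recurrence a1 a2 m (\<lambda>k. integral S (f k))) S"
  unfolding ising_recurrence_def
  by (intro has_integral_add has_integral_diff has_integral_mult_right integrable_integral assms)

lemma cos_sin_shift:
  fixes m t :: real
  shows "cos ((m + 1) * t) = cos (m * t) * cos t - sin (m * t) * sin t"
    and "sin ((m + 1) * t) = sin (m * t) * cos t + cos (m * t) * sin t"
    and "cos ((m - 1) * t) = cos (m * t) * cos t + sin (m * t) * sin t"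
    and "sin ((m - 1) * t) = sin (m * t) * cos t - cos (m * t) * sin t"
    and "cos ((m + 2) * t) = cos (m * t) * (cos t ^ 2 - sin t ^ 2) - sin (m * t) * (2 * sin t * cos t)"
    and "sin ((m + 2) * t) = sin (m * t) * (cos t ^ 2 - sin t ^ 2) + cos (m * t) * (2 * sin t * cos t)"
    and "cos ((m - 2) * t) = cos (m * t) * (cos t ^ 2 - sin t ^ 2) + sin (m * t) * (2 * sin t * cos t)"
    and "sin ((m - 2) * t) = sin (m * t) * (cos t ^ 2 - sin t ^ 2) - cos (m * t) * (2 * sin t * cos t)"
  by (simp_all add: distrib_right left_diff_distrib cos_add sin_add cos_diff sin_diff
      cos_double sin_double)

lemma ising_symbol_eq_sum_squares:
  "ising_symbol a1 a2 t = (ising_numerator a1 a2 k t)\<^sup>2 + (ising_conjugate a1 a2 k t)\<^sup>2"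
proof -
  define P where "P = 1 + a1 * a2 - (a1 + a2) * cos t"
  define Q where "Q = (a1 - a2) * sin t"
  have "ising_symbol a1 a2 t = P\<^sup>2 + Q\<^sup>2"
    using sin_cos_squared_add[of t] unfolding ising_symbol_def P_def Q_def by algebra
  also have "\<dots> = (P\<^sup>2 + Q\<^sup>2) * ((sin (k * t))\<^sup>2 + (cos (k * t))\<^sup>2)"
    by simp
  also have "\<dots> = (ising_numerator a1 a2 k t)\<^sup>2 + (ising_conjugate a1 a2 k t)\<^sup>2"
    unfolding ising_numerator_def ising_conjugate_def P_def[symmetric] Q_def[symmetric]
    by algebra
  finally show ?thesis .
qed

lemma ising_recurrence_numerator:
  "ising_recurrence a1 a2 m (\<lambda>k. ising_numerator a1 a2 k t) =
     2 * ising_symbol a1 a2 t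
       * (m * ising_numerator a1 a2 m t
          + (a1 + a2) * sin t * sin (m * t) + (a1 - a2) * cos t * cos (m * t))
   + ising_conjugate a1 a2 m t
       * (2 * a1 * sin t * (1 - 2 * a2 * cos t + a2\<^sup>2) + 2 * a2 * sin t * (1 - 2 * a1 * cos t + a1\<^sup>2))"
  using sin_cos_squared_add[of t]
  unfolding ising_recurrence_def ising_numerator_def ising_conjugate_def ising_symbol_def
    cos_sin_shift
  by algebra

lemma abs_ising_integrand_le_1: "\<bar>ising_integrand a1 a2 k t\<bar> \<le> 1"
proof -
  have "\<bar>ising_numerator a1 a2 k t\<bar> \<le> sqrt (ising_symbol a1 a2 t)"
    by (rule real_le_rsqrt) (simp add: ising_symbol_eq_sum_squares[of _ _ _ k])
  then show ?thesis
    by (cases "sqrt (ising_symbol a1 a2 t) = 0")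
      (simp_all add: ising_integrand_def divide_le_eq_1)
qed

lemma ising_integrand_integrable: "ising_integrand a1 a2 k integrable_on {-pi..pi}"
proof (rule measurable_bounded_by_integrable_imp_integrable[where g = "\<lambda>_. 1"])
  show "ising_integrand a1 a2 k \<in> borel_measurable (lebesgue_on {-pi..pi})"
    unfolding ising_integrand_def[abs_def] ising_numerator_def ising_symbol_def
    by (intro borel_measurable_divide continuous_imp_measurable_on_sets_lebesgue
        continuous_intros) auto
  show "norm (ising_integrand a1 a2 k t) \<le> 1" for t
    using abs_ising_integrand_le_1 by simp
qed auto

lemma ising_symbol_pos:
  assumes "sin t \<noteq> 0"
  shows "0 < ising_symbol a1 a2 t"
proof -
  have "1 - 2 * a * cos t + a\<^sup>2 = (a - cos t)\<^sup>2 + (sin t)\<^sup>2" for a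
    using sin_cos_squared_add[of t] by algebra
  moreover have "0 < (a - cos t)\<^sup>2 + (sin t)\<^sup>2" for a
    using assms by (simp add: add_nonneg_pos)
  ultimately show ?thesis
    unfolding ising_symbol_def by simp
qed

lemma has_real_derivative_ising_conjugate:
  "(ising_conjugate a1 a2 m has_real_derivative
      m * ising_numerator a1 a2 m t
      + (a1 + a2) * sin t * sin (m * t) + (a1 - a2) * cos t * cos (m * t)) (at t)"
  unfolding ising_conjugate_def[abs_def] ising_numerator_def
  by (auto intro!: derivative_eq_intros simp: algebra_simps)

lemma has_real_derivative_ising_symbol:
  "(ising_symbol a1 a2 has_real_derivative
      2 * a1 * sin t * (1 - 2 * a2 * cos t + a2\<^sup>2) + 2 * a2 * sin t * (1 - 2 * a1 * cos t + a1\<^sup>2))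
     (at t)"
  unfolding ising_symbol_def[abs_def]
  by (auto intro!: derivative_eq_intros simp: algebra_simps)

lemma has_real_derivative_ising_antiderivative:
  assumes "0 < ising_symbol a1 a2 t"
  shows "((\<lambda>t. ising_conjugate a1 a2 m t * sqrt (ising_symbol a1 a2 t)) has_real_derivative
           ising_recurrence a1 a2 m (\<lambda>k. ising_integrand a1 a2 k t) / 2) (at t)"
proof -
  define q where "q = sqrt (ising_symbol a1 a2 t)"
  have "0 < q" and "ising_symbol a1 a2 t = q\<^sup>2"
    using assms by (simp_all add: q_def)
  have integrand_recurrence:
    "ising_recurrence a1 a2 m (\<lambda>k. ising_integrand a1 a2 k t) =
       ising_recurrence a1 a2 m (\<lambda>k. ising_numerator a1 a2 k t) / q"
    unfolding ising_integrand_def q_def by (rule ising_recurrence_divide)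
  show ?thesis
    by (rule DERIV_cong[OF DERIV_mult[OF has_real_derivative_ising_conjugate
          DERIV_chain2[OF DERIV_real_sqrt[OF assms] has_real_derivative_ising_symbol]]])
      (use \<open>0 < q\<close> \<open>ising_symbol a1 a2 t = q\<^sup>2\<close> in
        \<open>simp add: integrand_recurrence ising_recurrence_numerator field_simps power2_eq_square
          flip: q_def\<close>)
qed

lemma ising_recurrence_integrals_eq_0:
  assumes "m \<in> \<int>"
  shows "ising_recurrence a1 a2 m (\<lambda>k. integral {-pi..pi} (ising_integrand a1 a2 k)) = 0"
proof -
  let ?G = "\<lambda>t. ising_conjugate a1 a2 m t * sqrt (ising_symbol a1 a2 t)"
  have "((\<lambda>t. ising_recurrence a1 a2 m (\<lambda>k. ising_integrand a1 a2 k t) / 2)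
          has_integral ?G pi - ?G (-pi)) {-pi..pi}"
  proof (rule fundamental_theorem_of_calculus_interior_strong[of "{0}"])
    fix t assume "t \<in> {-pi<..<pi} - {0}"
    then have "sin t \<noteq> 0"
      using sin_eq_0_pi by auto
    then show "(?G has_vector_derivative
                 ising_recurrence a1 a2 m (\<lambda>k. ising_integrand a1 a2 k t) / 2) (at t)"
      using has_real_derivative_ising_antiderivative ising_symbol_pos
      by (simp add: has_real_derivative_iff_has_vector_derivative)
  next
    show "continuous_on {-pi..pi} ?G"
      unfolding ising_conjugate_def ising_symbol_def by (intro continuous_intros)
  qed auto
  moreover have "((\<lambda>t. ising_recurrence a1 a2 m (\<lambda>k. ising_integrand a1 a2 k t) / 2) has_integral
      ising_recurrence a1 a2 m (\<lambda>k. integral {-pi..pi} (ising_integrand a1 a2 k)) / 2) {-pi..pi}"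
    by (intro has_integral_divide has_integral_ising_recurrence ising_integrand_integrable)
  ultimately have "ising_recurrence a1 a2 m (\<lambda>k. integral {-pi..pi} (ising_integrand a1 a2 k)) / 2
                     = ?G pi - ?G (-pi)"
    by (rule has_integral_unique[rotated])
  moreover have "?G pi = 0" "?G (-pi) = 0"
    using assms by (simp_all add: ising_conjugate_def sin_times_pi_eq_0)
  ultimately show ?thesis
    by simp
qed

theorem corollary5:
  fixes z1 z2 a1 a2 :: real and n :: int
  assumes "0 < z1" "z1 < 1" "0 < z2" "z2 < 1"
    and "a1 = z2 * (1 - z1) / (1 + z1)"
    and "a2 = (1 / z2) * ((1 - z1) / (1 + z1))"
  shows "2 * a1 * a2 * of_int (n - 3) * ising_w a1 a2 (n - 3)
         - (1 + a1 * a2) * (of_int (2 * n - 5) * a1 + of_int (2 * n - 3) * a2) * ising_w a1 a2 (n - 2)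
         + 2 * (of_int (n - 2) * a1\<^sup>2 + of_int n * a2\<^sup>2 + of_int (n - 1) * (1 + a1 * a2)\<^sup>2)
             * ising_w a1 a2 (n - 1)
         - (1 + a1 * a2) * (of_int (2 * n - 1) * a1 + of_int (2 * n + 1) * a2) * ising_w a1 a2 n
         + 2 * a1 * a2 * of_int (n + 1) * ising_w a1 a2 (n + 1) = 0"
proof -
  define m where "m = real_of_int n - 1"
  define W where "W k = integral {-pi..pi} (ising_integrand a1 a2 k) / (2 * pi)" for k
  have recurrence: "ising_recurrence a1 a2 m W = 0"
    unfolding W_def ising_recurrence_divide m_def
    by (simp add: ising_recurrence_integrals_eq_0)
  have w: "ising_w a1 a2 j = W (of_int j)" for j
    unfolding W_def ising_w_eq_integral ..
  have coefficients: "real_of_int (n - 3) = m - 2" "real_of_int (2 * n - 5) = 2 * m - 3"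
    "real_of_int (2 * n - 3) = 2 * m - 1" "real_of_int (n - 2) = m - 1"
    "real_of_int (n - 1) = m" "real_of_int (2 * n - 1) = 2 * m + 1"
    "real_of_int (2 * n + 1) = 2 * m + 3" "real_of_int (n + 1) = m + 2" "real_of_int n = m + 1"
    unfolding m_def by simp_all
  show ?thesis
    using recurrence unfolding w coefficients ising_recurrence_def .
qed

end
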